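(* Let $\mathcal{C}$ be a category. The functor $\mathcal G\colon\mathbf{Comon}\to\mathbf{Cat}/\mathcal{C}^{\mathbf 2}$ sending a comonad over $\mathrm{dom}$ $\mathsf L$ to $U_{\mathsf L}\colon\mathsf L\text{-}\mathbf{Map}\to\mathcal{C}^{\mathbf 2}$ is lax monoidal from $(\mathbf{Comon},\otimes,I)$ to $(\mathbf{Cat}/\mathcal{C}^{\mathbf 2},\bullet,\mathcal I)$.
   Context: $\mathcal{C}^{\mathbf 2}$ is the arrow category. $\mathbf{Comon}$: objects are comonads over $\mathrm{dom}$, i.e. functorial factorisations $(E,\lambda,\rho)$ ($E\colon\mathcal{C}^{\mathbf 2}\to\mathcal{C}$, natural $\lambda\colon\mathrm{dom}\Rightarrow E$, $\rho\colon E\Rightarrow\mathrm{cod}$, $\rho_f\lambda_f=f$) with natural $\sigma_f\colon Ef\to E(\lambda_f)$, $\sigma_f\lambda_f=\lambda_{\lambda_f}$, $\rho_{\lambda_f}\sigma_f=1$, $E(1_X,\rho_f)\sigma_f=1$, $E(1_X,\sigma_f)\sigma_f=\sigma_{\lambda_f}\sigma_f$; morphisms natural $\alpha\colon E\Rightarrow E'$ with $\alpha\lambda=\lambda'$, $\rho'\alpha=\rho$, $\sigma'_f\alpha_f=\alpha_{\lambda'_f}E(1_X,\alpha_f)\sigma_f$. Unit $I$: $E=\mathrm{dom}$, $\lambda=1$, $\rho=\kappa$ (so $I$-coalgebras are exactly the isomorphisms). Tensor: $\mathsf L^2\otimes\mathsf L^1$ has factorisation $X\xrightarrow{\lambda^2_{\rho^1_f}\lambda^1_f}E^2(\rho^1_f)\xrightarrow{\rho^2_{\rho^1_f}}Y$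 and comultiplication $E^2(E^1(1_X,\lambda^2_{\rho^1_f}),1_Y)\circ E^2(\sigma^1_f,1_Y)\circ\sigma^2_{\rho^1_f}$; on morphisms $(\beta\otimes\alpha)_f=\beta_{\nu_f}E^2(\alpha_f,1_Y)$ where $\nu$ is the right part of the codomain of $\alpha$. $\mathsf L\text{-}\mathbf{Map}$: objects $(f,s)$, $s\colon Y\to Ef$, $sf=\lambda_f$, $\rho_fs=1_Y$, $\sigma_fs=E(1_X,s)s$; morphisms squares with $tk=E(h,k)s$. On morphisms, $\mathcal G(\alpha)$ sends $(f,s)$ to $(f,\alpha_fs)$. $(\bullet,\mathcal I)$ on $\mathbf{Cat}/\mathcal{C}^{\mathbf 2}$: $\mathcal I=(\mathcal{C}\to\mathcal{C}^{\mathbf 2},X\mapsto1_X)$; $\mathcal A\bullet\mathcal B$ is the pullback of $\mathrm{cod}\circ U_{\mathcal B}$ and $\mathrm{dom}\circ U_{\mathcal A}$, with projection $(b,a)\mapsto U_{\mathcal A}a\circ U_{\mathcal B}b$. *)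

theory Defs
  imports Main
begin

record ('o,'a) cat =
  obj :: "'o set"
  arr :: "'a set"
  dm  :: "'a \<Rightarrow> 'o"
  cd  :: "'a \<Rightarrow> 'o"
  idn :: "'o \<Rightarrow> 'a"
  cmp :: "'a \<Rightarrow> 'a \<Rightarrow> 'a"

definition category :: "('o,'a) cat \<Rightarrow> bool" where
  "category A \<longleftrightarrow>
    (\<forall>f\<in>arr A. dm A f \<in> obj A \<and> cd A f \<in> obj A) \<and>
    (\<forall>X\<in>obj A. idn A X \<in> arr A \<and> dm A (idn A X) = X \<and> cd A (idn A X) = X) \<and>
    (\<forall>f\<in>arr A. \<forall>g\<in>arr A. cd A f = dm A g \<longrightarrow>
        cmp A g f \<in> arr A \<and> dm A (cmp A g f) = dm A f \<and> cd A (cmp A g f) = cd A g) \<and>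
    (\<forall>f\<in>arr A. cmp A (idn A (cd A f)) f = f \<and> cmp A f (idn A (dm A f)) = f) \<and>
    (\<forall>f\<in>arr A. \<forall>g\<in>arr A. \<forall>h\<in>arr A. cd A f = dm A g \<longrightarrow> cd A g = dm A h \<longrightarrow>
        cmp A h (cmp A g f) = cmp A (cmp A h g) f)"

definition hom :: "('o,'a) cat \<Rightarrow> 'a \<Rightarrow> 'o \<Rightarrow> 'o \<Rightarrow> bool" where
  "hom A f X Y \<longleftrightarrow> f \<in> arr A \<and> dm A f = X \<and> cd A f = Y"

record ('o1,'a1,'o2,'a2) ftr =
  fo :: "'o1 \<Rightarrow> 'o2"
  fa :: "'a1 \<Rightarrow> 'a2"

definition is_functor :: "('o1,'a1) cat \<Rightarrow> ('o2,'a2) cat \<Rightarrow> ('o1,'a1,'o2,'a2) ftr \<Rightarrow> bool" where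
  "is_functor A B F \<longleftrightarrow>
    (\<forall>X\<in>obj A. fo F X \<in> obj B) \<and>
    (\<forall>a\<in>arr A. fa F a \<in> arr B \<and> dm B (fa F a) = fo F (dm A a) \<and> cd B (fa F a) = fo F (cd A a)) \<and>
    (\<forall>X\<in>obj A. fa F (idn A X) = idn B (fo F X)) \<and>
    (\<forall>a\<in>arr A. \<forall>b\<in>arr A. cd A a = dm A b \<longrightarrow> fa F (cmp A b a) = cmp B (fa F b) (fa F a))"

text \<open>A morphism (h,k) : f \<rightarrow> g of the arrow category is stored as the tuple (f,g,h,k).\<close>

type_synonym 'm sq = "'m \<times> 'm \<times> 'm \<times> 'm"

definition sq_h :: "'m sq \<Rightarrow> 'm" where "sq_h q = fst (snd (snd q))"
definition sq_k :: "'m sq \<Rightarrow> 'm" where "sq_k q = snd (snd (snd q))"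

definition arrow_cat :: "('o,'m) cat \<Rightarrow> ('m, 'm sq) cat" where
  "arrow_cat C = \<lparr> obj = arr C,
     arr = {(f,g,h,k). f \<in> arr C \<and> g \<in> arr C \<and> h \<in> arr C \<and> k \<in> arr C \<and>
                       dm C h = dm C f \<and> cd C h = dm C g \<and> dm C k = cd C f \<and> cd C k = cd C g \<and>
                       cmp C g h = cmp C k f},
     dm = (\<lambda>(f,g,h,k). f),
     cd = (\<lambda>(f,g,h,k). g),
     idn = (\<lambda>f. (f, f, idn C (dm C f), idn C (cd C f))),
     cmp = (\<lambda>(g',l,h',k') (f,g,h,k). (f, l, cmp C h' h, cmp C k' k)) \<rparr>"

section \<open>Comonads over dom (the category Comon)\<close>

record ('o,'m) comon =
  EF  :: "('m, 'm sq, 'o, 'm) ftr"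
  lam :: "'m \<Rightarrow> 'm"
  rho :: "'m \<Rightarrow> 'm"
  sig :: "'m \<Rightarrow> 'm"

definition E0 :: "('o,'m) comon \<Rightarrow> 'm \<Rightarrow> 'o" where "E0 L = fo (EF L)"
definition E1 :: "('o,'m) comon \<Rightarrow> 'm sq \<Rightarrow> 'm" where "E1 L = fa (EF L)"

definition comonad_dom :: "('o,'m) cat \<Rightarrow> ('o,'m) comon \<Rightarrow> bool" where
  "comonad_dom C L \<longleftrightarrow>
    is_functor (arrow_cat C) C (EF L) \<and>
    (\<forall>f\<in>arr C. hom C (lam L f) (dm C f) (E0 L f)) \<and>
    (\<forall>f\<in>arr C. hom C (rho L f) (E0 L f) (cd C f)) \<and>
    (\<forall>f\<in>arr C. hom C (sig L f) (E0 L f) (E0 L (lam L f))) \<and>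
    (\<forall>f g h k. (f,g,h,k) \<in> arr (arrow_cat C) \<longrightarrow>
        cmp C (lam L g) h = cmp C (E1 L (f,g,h,k)) (lam L f) \<and>
        cmp C k (rho L f) = cmp C (rho L g) (E1 L (f,g,h,k)) \<and>
        cmp C (sig L g) (E1 L (f,g,h,k))
          = cmp C (E1 L (lam L f, lam L g, h, E1 L (f,g,h,k))) (sig L f)) \<and>
    (\<forall>f\<in>arr C. cmp C (rho L f) (lam L f) = f) \<and>
    (\<forall>f\<in>arr C. cmp C (sig L f) (lam L f) = lam L (lam L f)) \<and>
    (\<forall>f\<in>arr C. cmp C (rho L (lam L f)) (sig L f) = idn C (E0 L f)) \<and>
    (\<forall>f\<in>arr C. cmp C (E1 L (lam L f, f, idn C (dm C f), rho L f)) (sig L f) = idn C (E0 L f)) \<and>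
    (\<forall>f\<in>arr C. cmp C (E1 L (lam L f, lam L (lam L f), idn C (dm C f), sig L f)) (sig L f)
                = cmp C (sig L (lam L f)) (sig L f))"

definition comon_mor :: "('o,'m) cat \<Rightarrow> ('o,'m) comon \<Rightarrow> ('o,'m) comon \<Rightarrow> ('m \<Rightarrow> 'm) \<Rightarrow> bool" where
  "comon_mor C L L' \<alpha> \<longleftrightarrow>
    (\<forall>f\<in>arr C. hom C (\<alpha> f) (E0 L f) (E0 L' f)) \<and>
    (\<forall>f g h k. (f,g,h,k) \<in> arr (arrow_cat C) \<longrightarrow>
        cmp C (\<alpha> g) (E1 L (f,g,h,k)) = cmp C (E1 L' (f,g,h,k)) (\<alpha> f)) \<and>
    (\<forall>f\<in>arr C. cmp C (\<alpha> f) (lam L f) = lam L' f) \<and>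
    (\<forall>f\<in>arr C. cmp C (rho L' f) (\<alpha> f) = rho L f) \<and>
    (\<forall>f\<in>arr C. cmp C (sig L' f) (\<alpha> f)
        = cmp C (\<alpha> (lam L' f)) (cmp C (E1 L (lam L f, lam L' f, idn C (dm C f), \<alpha> f)) (sig L f)))"

text \<open>Identity family on a comonad (used for the identity associator / unitors of Comon).\<close>

definition idc :: "('o,'m) cat \<Rightarrow> ('o,'m) comon \<Rightarrow> 'm \<Rightarrow> 'm" where
  "idc C L = (\<lambda>f. idn C (E0 L f))"

definition unitC :: "('o,'m) cat \<Rightarrow> ('o,'m) comon" where
  "unitC C = \<lparr> EF = \<lparr>fo = dm C, fa = (\<lambda>(f,g,h,k). h)\<rparr>,
               lam = (\<lambda>f. idn C (dm C f)),
               rho = (\<lambda>f. f),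
               sig = (\<lambda>f. idn C (dm C f)) \<rparr>"

definition tens :: "('o,'m) cat \<Rightarrow> ('o,'m) comon \<Rightarrow> ('o,'m) comon \<Rightarrow> ('o,'m) comon" where
  "tens C L2 L1 =
    (let lamT = (\<lambda>f. cmp C (lam L2 (rho L1 f)) (lam L1 f));
         t = (\<lambda>f. cmp C (lam L2 (rho L1 f)) (rho L1 (lam L1 f)))
     in \<lparr> EF = \<lparr> fo = (\<lambda>f. E0 L2 (rho L1 f)),
                 fa = (\<lambda>(f,g,h,k). E1 L2 (rho L1 f, rho L1 g, E1 L1 (f,g,h,k), k)) \<rparr>,
          lam = lamT,
          rho = (\<lambda>f. rho L2 (rho L1 f)),
          sig = (\<lambda>f. cmp C
                   (E1 L2 (t f, rho L1 (lamT f),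
                           E1 L1 (lam L1 f, lamT f, idn C (dm C f), lam L2 (rho L1 f)),
                           idn C (E0 L2 (rho L1 f))))
                   (cmp C (E1 L2 (lam L2 (rho L1 f), t f, sig L1 f, idn C (E0 L2 (rho L1 f))))
                          (sig L2 (rho L1 f)))) \<rparr>)"

definition tens_mor :: "('o,'m) cat \<Rightarrow> ('o,'m) comon \<Rightarrow> ('o,'m) comon \<Rightarrow> ('o,'m) comon
      \<Rightarrow> ('m \<Rightarrow> 'm) \<Rightarrow> ('m \<Rightarrow> 'm) \<Rightarrow> 'm \<Rightarrow> 'm" where
  "tens_mor C L2 L1 L1' \<beta> \<alpha> =
     (\<lambda>f. cmp C (\<beta> (rho L1' f)) (E1 L2 (rho L1 f, rho L1' f, \<alpha> f, idn C (cd C f))))"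

section \<open>Cat over C^2\<close>

type_synonym ('o,'a,'m) ocat = "('o,'a) cat \<times> ('o,'a,'m,'m sq) ftr"

definition over_cat :: "('x,'m) cat \<Rightarrow> ('o,'a,'m) ocat \<Rightarrow> bool" where
  "over_cat C A \<longleftrightarrow> category (fst A) \<and> is_functor (fst A) (arrow_cat C) (snd A)"

definition over_functor :: "('o1,'a1,'m) ocat \<Rightarrow> ('o2,'a2,'m) ocat \<Rightarrow> ('o1,'a1,'o2,'a2) ftr \<Rightarrow> bool" where
  "over_functor A B F \<longleftrightarrow> is_functor (fst A) (fst B) F \<and>
     (\<forall>x\<in>obj (fst A). fo (snd B) (fo F x) = fo (snd A) x) \<and>
     (\<forall>a\<in>arr (fst A). fa (snd B) (fa F a) = fa (snd A) a)"

text \<open>A \<bullet> B: pullback of cod \<circ> U_B and dom \<circ> U_A; objects are pairs (b,a),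
  projection (b,a) \<mapsto> U_A a \<circ> U_B b.\<close>

definition bullet :: "('x,'m) cat \<Rightarrow> ('oa,'aa,'m) ocat \<Rightarrow> ('ob,'ab,'m) ocat \<Rightarrow> ('ob \<times> 'oa, 'ab \<times> 'aa, 'm) ocat" where
  "bullet C A B =
    (let CA = fst A; UA = snd A; CB = fst B; UB = snd B in
     (\<lparr> obj = {(b,a). b \<in> obj CB \<and> a \<in> obj CA \<and> cd C (fo UB b) = dm C (fo UA a)},
        arr = {(\<beta>,\<alpha>). \<beta> \<in> arr CB \<and> \<alpha> \<in> arr CA \<and> sq_k (fa UB \<beta>) = sq_h (fa UA \<alpha>)},
        dm = (\<lambda>(\<beta>,\<alpha>). (dm CB \<beta>, dm CA \<alpha>)),
        cd = (\<lambda>(\<beta>,\<alpha>). (cd CB \<beta>, cd CA \<alpha>)),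
        idn = (\<lambda>(b,a). (idn CB b, idn CA a)),
        cmp = (\<lambda>(\<beta>',\<alpha>') (\<beta>,\<alpha>). (cmp CB \<beta>' \<beta>, cmp CA \<alpha>' \<alpha>)) \<rparr>,
      \<lparr> fo = (\<lambda>(b,a). cmp C (fo UA a) (fo UB b)),
        fa = (\<lambda>(\<beta>,\<alpha>). (cmp C (fo UA (dm CA \<alpha>)) (fo UB (dm CB \<beta>)),
                         cmp C (fo UA (cd CA \<alpha>)) (fo UB (cd CB \<beta>)),
                         sq_h (fa UB \<beta>), sq_k (fa UA \<alpha>))) \<rparr>))"

text \<open>Associator (A \<bullet> B) \<bullet> C \<rightarrow> A \<bullet> (B \<bullet> C) of Cat/C^2 (same formula on objects and morphisms).
  F \<bullet> G on objects/morphisms is map_prod (G-part) (F-part).\<close>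

definition reassoc :: "'c \<times> ('b \<times> 'a) \<Rightarrow> ('c \<times> 'b) \<times> 'a" where
  "reassoc = (\<lambda>(c,(b,a)). ((c,b),a))"

definition unitI :: "('o,'m) cat \<Rightarrow> ('o,'m,'m) ocat" where
  "unitI C = (C, \<lparr> fo = (\<lambda>X. idn C X), fa = (\<lambda>m. (idn C (dm C m), idn C (cd C m), m, m)) \<rparr>)"

section \<open>The functor G : Comon \<rightarrow> Cat/C^2\<close>

type_synonym 'm gmor = "('m \<times> 'm) \<times> ('m \<times> 'm) \<times> 'm \<times> 'm"

definition LMap :: "('o,'m) cat \<Rightarrow> ('o,'m) comon \<Rightarrow> ('m \<times> 'm, 'm gmor) cat" where
  "LMap C L = (let Ob = {(f,s). f \<in> arr C \<and> hom C s (cd C f) (E0 L f) \<and>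
                         cmp C s f = lam L f \<and> cmp C (rho L f) s = idn C (cd C f) \<and>
                         cmp C (sig L f) s = cmp C (E1 L (f, lam L f, idn C (dm C f), s)) s}
     in \<lparr> obj = Ob,
          arr = {((f,s),(g,t),h,k). (f,s) \<in> Ob \<and> (g,t) \<in> Ob \<and>
                    (f,g,h,k) \<in> arr (arrow_cat C) \<and> cmp C t k = cmp C (E1 L (f,g,h,k)) s},
          dm = (\<lambda>(x,y,h,k). x),
          cd = (\<lambda>(x,y,h,k). y),
          idn = (\<lambda>(f,s). ((f,s),(f,s), idn C (dm C f), idn C (cd C f))),
          cmp = (\<lambda>(y,z,h',k') (x,y',h,k). (x, z, cmp C h' h, cmp C k' k)) \<rparr>)"

definition GU :: "('m \<times> 'm, 'm gmor, 'm, 'm sq) ftr" where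
  "GU = \<lparr> fo = fst, fa = (\<lambda>((f,s),(g,t),h,k). (f,g,h,k)) \<rparr>"

definition Gob :: "('o,'m) cat \<Rightarrow> ('o,'m) comon \<Rightarrow> ('m \<times> 'm, 'm gmor, 'm) ocat" where
  "Gob C L = (LMap C L, GU)"

definition Gmor :: "('o,'m) cat \<Rightarrow> ('m \<Rightarrow> 'm) \<Rightarrow> ('m \<times> 'm, 'm gmor, 'm \<times> 'm, 'm gmor) ftr" where
  "Gmor C \<alpha> = \<lparr> fo = (\<lambda>(f,s). (f, cmp C (\<alpha> f) s)),
                fa = (\<lambda>((f,s),(g,t),h,k). ((f, cmp C (\<alpha> f) s), (g, cmp C (\<alpha> g) t), h, k)) \<rparr>"

section \<open>Lax monoidal structure on G\<close>

text \<open>phi L2 L1 : G L2 \<bullet> G L1 \<rightarrow> G (L2 \<otimes> L1) and phi0 : \<I> \<rightarrow> G I, satisfying naturality,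
  the associativity hexagon and the two unit laws; the associator and unitors of
  (Comon, \<otimes>, I) are identities.\<close>

definition lax_monoidal_G :: "('o,'m) cat
   \<Rightarrow> (('o,'m) comon \<Rightarrow> ('o,'m) comon \<Rightarrow> (('m \<times> 'm) \<times> ('m \<times> 'm), 'm gmor \<times> 'm gmor, 'm \<times> 'm, 'm gmor) ftr)
   \<Rightarrow> ('o, 'm, 'm \<times> 'm, 'm gmor) ftr \<Rightarrow> bool" where
  "lax_monoidal_G C \<phi> \<phi>0 \<longleftrightarrow>
    (\<forall>L2 L1. comonad_dom C L2 \<longrightarrow> comonad_dom C L1 \<longrightarrow>
        over_functor (bullet C (Gob C L2) (Gob C L1)) (Gob C (tens C L2 L1)) (\<phi> L2 L1)) \<and>
    over_functor (unitI C) (Gob C (unitC C)) \<phi>0 \<and>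
    (\<forall>L2 L2' L1 L1' \<beta> \<alpha>. comonad_dom C L2 \<longrightarrow> comonad_dom C L2' \<longrightarrow>
        comonad_dom C L1 \<longrightarrow> comonad_dom C L1' \<longrightarrow>
        comon_mor C L2 L2' \<beta> \<longrightarrow> comon_mor C L1 L1' \<alpha> \<longrightarrow>
        (\<forall>x\<in>obj (fst (bullet C (Gob C L2) (Gob C L1))).
           fo (\<phi> L2' L1') (map_prod (fo (Gmor C \<alpha>)) (fo (Gmor C \<beta>)) x)
             = fo (Gmor C (tens_mor C L2 L1 L1' \<beta> \<alpha>)) (fo (\<phi> L2 L1) x)) \<and>
        (\<forall>x\<in>arr (fst (bullet C (Gob C L2) (Gob C L1))).
           fa (\<phi> L2' L1') (map_prod (fa (Gmor C \<alpha>)) (fa (Gmor C \<beta>)) x)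
             = fa (Gmor C (tens_mor C L2 L1 L1' \<beta> \<alpha>)) (fa (\<phi> L2 L1) x))) \<and>
    (\<forall>L3 L2 L1. comonad_dom C L3 \<longrightarrow> comonad_dom C L2 \<longrightarrow> comonad_dom C L1 \<longrightarrow>
        (\<forall>x\<in>obj (fst (bullet C (bullet C (Gob C L3) (Gob C L2)) (Gob C L1))).
           fo (Gmor C (idc C (tens C (tens C L3 L2) L1)))
              (fo (\<phi> (tens C L3 L2) L1) (map_prod id (fo (\<phi> L3 L2)) x))
           = fo (\<phi> L3 (tens C L2 L1)) (map_prod (fo (\<phi> L2 L1)) id (reassoc x))) \<and>
        (\<forall>x\<in>arr (fst (bullet C (bullet C (Gob C L3) (Gob C L2)) (Gob C L1))).
           fa (Gmor C (idc C (tens C (tens C L3 L2) L1)))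
              (fa (\<phi> (tens C L3 L2) L1) (map_prod id (fa (\<phi> L3 L2)) x))
           = fa (\<phi> L3 (tens C L2 L1)) (map_prod (fa (\<phi> L2 L1)) id (reassoc x)))) \<and>
    (\<forall>L. comonad_dom C L \<longrightarrow>
        (\<forall>x\<in>obj (fst (bullet C (unitI C) (Gob C L))).
           fo (Gmor C (idc C (tens C (unitC C) L))) (fo (\<phi> (unitC C) L) (map_prod id (fo \<phi>0) x)) = fst x) \<and>
        (\<forall>x\<in>arr (fst (bullet C (unitI C) (Gob C L))).
           fa (Gmor C (idc C (tens C (unitC C) L))) (fa (\<phi> (unitC C) L) (map_prod id (fa \<phi>0) x)) = fst x) \<and>
        (\<forall>x\<in>obj (fst (bullet C (Gob C L) (unitI C))).
           fo (Gmor C (idc C (tens C L (unitC C)))) (fo (\<phi> L (unitC C)) (map_prod (fo \<phi>0) id x)) = snd x) \<and>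
        (\<forall>x\<in>arr (fst (bullet C (Gob C L) (unitI C))).
           fa (Gmor C (idc C (tens C L (unitC C)))) (fa (\<phi> L (unitC C)) (map_prod (fa \<phi>0) id x)) = snd x))"

end

theory Submission
  imports Defs
begin

(* Given an L1-map (f, s) and an L2-map (g, t) with g f defined, the morphism
   a = E1(1, g) s : cod f \<rightarrow> E1(g f) lifts g through rho1(g f), so (a, 1) is a commutative square
   g \<rightarrow> rho1(g f) and E2(a, 1) t is a section of the right factor rho2(rho1(g f)) of L2 \<otimes> L1 at g f.
   This is the multiplication phi on objects; on morphisms it pastes the two squares, and the unit
   phi0 equips each identity with the identity section.  That E2(a, 1) t satisfies the coalgebra
   equations, and that phi is natural, associative and unital, reduces to the coalgebra equations
   of s and t by naturality of lambda, rho, sigma and functoriality of E1 and E2. *)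

lemma arrow_cat_simps [simp]:
  "obj (arrow_cat C) = arr C"
  "dm (arrow_cat C) (f,g,h,k) = f"
  "cd (arrow_cat C) (f,g,h,k) = g"
  "idn (arrow_cat C) f = (f, f, idn C (dm C f), idn C (cd C f))"
  "cmp (arrow_cat C) (g',l,h',k') (f,g,h,k) = (f, l, cmp C h' h, cmp C k' k)"
  unfolding arrow_cat_def by auto

lemma sq_simps [simp]: "sq_h (f,g,h,k) = h" "sq_k (f,g,h,k) = k"
  unfolding sq_h_def sq_k_def by auto

lemma LMap_simps [simp]:
  "dm (LMap C L) (x,y,h,k) = x" "cd (LMap C L) (x,y,h,k) = y"
  "idn (LMap C L) (f,s) = ((f,s),(f,s), idn C (dm C f), idn C (cd C f))"
  "cmp (LMap C L) (y,z,h',k') (x,y',h,k) = (x, z, cmp C h' h, cmp C k' k)"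
  unfolding LMap_def Let_def by auto

lemma Gob_simps [simp]: "fst (Gob C L) = LMap C L" "snd (Gob C L) = GU"
  unfolding Gob_def by auto

lemma GU_simps [simp]: "fo GU (f,s) = f" "fa GU ((f,s),(g,t),h,k) = (f,g,h,k)"
  unfolding GU_def by auto

lemma Gmor_simps [simp]:
  "fo (Gmor C \<alpha>) (f,s) = (f, cmp C (\<alpha> f) s)"
  "fa (Gmor C \<alpha>) ((f,s),(g,t),h,k) = ((f, cmp C (\<alpha> f) s), (g, cmp C (\<alpha> g) t), h, k)"
  unfolding Gmor_def by auto

lemma tens_simps [simp]:
  "E0 (tens C L2 L1) f = E0 L2 (rho L1 f)"
  "E1 (tens C L2 L1) (f,g,h,k) = E1 L2 (rho L1 f, rho L1 g, E1 L1 (f,g,h,k), k)"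
  "lam (tens C L2 L1) f = cmp C (lam L2 (rho L1 f)) (lam L1 f)"
  "rho (tens C L2 L1) f = rho L2 (rho L1 f)"
  unfolding tens_def Let_def E0_def E1_def by simp_all

lemma sig_tens:
  "sig (tens C L2 L1) f =
     cmp C (E1 L2 (cmp C (lam L2 (rho L1 f)) (rho L1 (lam L1 f)), rho L1 (cmp C (lam L2 (rho L1 f)) (lam L1 f)),
                   E1 L1 (lam L1 f, cmp C (lam L2 (rho L1 f)) (lam L1 f), idn C (dm C f), lam L2 (rho L1 f)),
                   idn C (E0 L2 (rho L1 f))))
       (cmp C (E1 L2 (lam L2 (rho L1 f), cmp C (lam L2 (rho L1 f)) (rho L1 (lam L1 f)), sig L1 f,
                      idn C (E0 L2 (rho L1 f))))
          (sig L2 (rho L1 f)))"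
  unfolding tens_def Let_def by simp

lemma unitC_simps [simp]:
  "E0 (unitC C) f = dm C f" "E1 (unitC C) (f,g,h,k) = h"
  "lam (unitC C) f = idn C (dm C f)" "rho (unitC C) f = f" "sig (unitC C) f = idn C (dm C f)"
  unfolding unitC_def E0_def E1_def by auto

lemma bullet_simps:
  "obj (fst (bullet C A B)) = {(b,a). b \<in> obj (fst B) \<and> a \<in> obj (fst A) \<and> cd C (fo (snd B) b) = dm C (fo (snd A) a)}"
  "arr (fst (bullet C A B)) = {(\<beta>,\<alpha>). \<beta> \<in> arr (fst B) \<and> \<alpha> \<in> arr (fst A) \<and> sq_k (fa (snd B) \<beta>) = sq_h (fa (snd A) \<alpha>)}"
  "dm (fst (bullet C A B)) (\<beta>,\<alpha>) = (dm (fst B) \<beta>, dm (fst A) \<alpha>)"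
  "cd (fst (bullet C A B)) (\<beta>,\<alpha>) = (cd (fst B) \<beta>, cd (fst A) \<alpha>)"
  "idn (fst (bullet C A B)) (b,a) = (idn (fst B) b, idn (fst A) a)"
  "cmp (fst (bullet C A B)) (\<beta>',\<alpha>') (\<beta>,\<alpha>) = (cmp (fst B) \<beta>' \<beta>, cmp (fst A) \<alpha>' \<alpha>)"
  "fo (snd (bullet C A B)) (b,a) = cmp C (fo (snd A) a) (fo (snd B) b)"
  "fa (snd (bullet C A B)) (\<beta>,\<alpha>) = (cmp C (fo (snd A) (dm (fst A) \<alpha>)) (fo (snd B) (dm (fst B) \<beta>)),
                         cmp C (fo (snd A) (cd (fst A) \<alpha>)) (fo (snd B) (cd (fst B) \<beta>)),
                         sq_h (fa (snd B) \<beta>), sq_k (fa (snd A) \<alpha>))"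
  unfolding bullet_def Let_def by auto

lemma unitI_simps [simp]:
  "fst (unitI C) = C" "fo (snd (unitI C)) X = idn C X"
  "fa (snd (unitI C)) m = (idn C (dm C m), idn C (cd C m), m, m)"
  unfolding unitI_def by auto

definition comm_square :: "('o,'m) cat \<Rightarrow> 'm \<Rightarrow> 'm \<Rightarrow> 'm \<Rightarrow> 'm \<Rightarrow> bool" where
  "comm_square C f g h k \<longleftrightarrow> (f,g,h,k) \<in> arr (arrow_cat C)"

locale ambient_category =
  fixes C :: "('o,'m) cat"
  assumes category: "category C"
begin

lemma dm_obj [simp]: "f \<in> arr C \<Longrightarrow> dm C f \<in> obj C"
  and cd_obj [simp]: "f \<in> arr C \<Longrightarrow> cd C f \<in> obj C"
  and idn_arr [simp]: "X \<in> obj C \<Longrightarrow> idn C X \<in> arr C"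
  and dm_idn [simp]: "X \<in> obj C \<Longrightarrow> dm C (idn C X) = X"
  and cd_idn [simp]: "X \<in> obj C \<Longrightarrow> cd C (idn C X) = X"
  and cmp_arr [simp]: "f \<in> arr C \<Longrightarrow> g \<in> arr C \<Longrightarrow> cd C f = dm C g \<Longrightarrow> cmp C g f \<in> arr C"
  and dm_cmp [simp]: "f \<in> arr C \<Longrightarrow> g \<in> arr C \<Longrightarrow> cd C f = dm C g \<Longrightarrow> dm C (cmp C g f) = dm C f"
  and cd_cmp [simp]: "f \<in> arr C \<Longrightarrow> g \<in> arr C \<Longrightarrow> cd C f = dm C g \<Longrightarrow> cd C (cmp C g f) = cd C g"
  and comp_idn_left [simp]: "f \<in> arr C \<Longrightarrow> cd C f = Y \<Longrightarrow> cmp C (idn C Y) f = f"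
  and comp_idn_right [simp]: "f \<in> arr C \<Longrightarrow> dm C f = X \<Longrightarrow> cmp C f (idn C X) = f"
  using category unfolding category_def by blast+

lemma comp_assoc [simp]:
  "f \<in> arr C \<Longrightarrow> g \<in> arr C \<Longrightarrow> h \<in> arr C \<Longrightarrow> cd C f = dm C g \<Longrightarrow> cd C g = dm C h \<Longrightarrow>
   cmp C (cmp C h g) f = cmp C h (cmp C g f)"
  using category unfolding category_def by metis

lemma comp_assoc_subst:
  "cmp C a b = c \<Longrightarrow> x \<in> arr C \<Longrightarrow> a \<in> arr C \<Longrightarrow> b \<in> arr C \<Longrightarrow>
   cd C x = dm C b \<Longrightarrow> cd C b = dm C a \<Longrightarrow> cmp C a (cmp C b x) = cmp C c x"
  by (metis comp_assoc)

lemma comp_assoc_cong: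
  "cmp C a b = cmp C c d \<Longrightarrow> x \<in> arr C \<Longrightarrow> a \<in> arr C \<Longrightarrow> b \<in> arr C \<Longrightarrow> c \<in> arr C \<Longrightarrow> d \<in> arr C \<Longrightarrow>
   cd C x = dm C b \<Longrightarrow> cd C b = dm C a \<Longrightarrow> cd C x = dm C d \<Longrightarrow> cd C d = dm C c \<Longrightarrow>
   cmp C a (cmp C b x) = cmp C c (cmp C d x)"
  by (metis comp_assoc)

lemma comm_square_iff:
  "comm_square C f g h k \<longleftrightarrow> f \<in> arr C \<and> g \<in> arr C \<and> h \<in> arr C \<and> k \<in> arr C \<and>
     dm C h = dm C f \<and> cd C h = dm C g \<and> dm C k = cd C f \<and> cd C k = cd C g \<and> cmp C g h = cmp C k f"
  unfolding comm_square_def arrow_cat_def by simp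

lemma comm_squareI:
  "f \<in> arr C \<Longrightarrow> g \<in> arr C \<Longrightarrow> h \<in> arr C \<Longrightarrow> k \<in> arr C \<Longrightarrow>
   dm C h = dm C f \<Longrightarrow> cd C h = dm C g \<Longrightarrow> dm C k = cd C f \<Longrightarrow> cd C k = cd C g \<Longrightarrow>
   cmp C g h = cmp C k f \<Longrightarrow> comm_square C f g h k"
  unfolding comm_square_iff by blast

lemma comm_square_arrs:
  "comm_square C f g h k \<Longrightarrow> f \<in> arr C \<and> g \<in> arr C \<and> h \<in> arr C \<and> k \<in> arr C \<and>
     dm C h = dm C f \<and> cd C h = dm C g \<and> dm C k = cd C f \<and> cd C k = cd C g"
  unfolding comm_square_iff by blast

lemma comm_square_commutes: "comm_square C f g h k \<Longrightarrow> cmp C g h = cmp C k f"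
  unfolding comm_square_iff by blast

lemma comm_square_idn [simp]: "f \<in> arr C \<Longrightarrow> comm_square C f f (idn C (dm C f)) (idn C (cd C f))"
  unfolding comm_square_iff by simp

lemma comm_square_comp:
  "comm_square C f g h k \<Longrightarrow> comm_square C g g' h' k' \<Longrightarrow> comm_square C f g' (cmp C h' h) (cmp C k' k)"
  unfolding comm_square_iff by (metis comp_assoc cmp_arr cd_cmp dm_cmp)

lemma comm_square_paste:
  assumes sq_f: "comm_square C f f' h k" and sq_g: "comm_square C g g' k k'"
  shows "comm_square C (cmp C g f) (cmp C g' f') h k'"
proof -
  note arrs = comm_square_arrs[OF sq_f] comm_square_arrs[OF sq_g]
  have "cmp C (cmp C g' f') h = cmp C g' (cmp C k f)"
    using arrs comm_square_commutes[OF sq_f] by simp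
  also have "\<dots> = cmp C k' (cmp C g f)"
    using comp_assoc_subst[OF comm_square_commutes[OF sq_g]] arrs by simp
  finally show ?thesis
    using arrs by (intro comm_squareI) simp_all
qed

lemma comm_square_precomp:
  "f \<in> arr C \<Longrightarrow> g \<in> arr C \<Longrightarrow> cd C f = dm C g \<Longrightarrow> comm_square C f (cmp C g f) (idn C (dm C f)) g"
  unfolding comm_square_iff by simp

lemma E0_obj [simp]: "comonad_dom C L \<Longrightarrow> f \<in> arr C \<Longrightarrow> E0 L f \<in> obj C"
  unfolding comonad_dom_def is_functor_def E0_def by simp

lemma E1_arr [simp]: "comonad_dom C L \<Longrightarrow> comm_square C f g h k \<Longrightarrow> E1 L (f,g,h,k) \<in> arr C"
  and E1_dm [simp]: "comonad_dom C L \<Longrightarrow> comm_square C f g h k \<Longrightarrow> dm C (E1 L (f,g,h,k)) = E0 L f"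
  and E1_cd [simp]: "comonad_dom C L \<Longrightarrow> comm_square C f g h k \<Longrightarrow> cd C (E1 L (f,g,h,k)) = E0 L g"
  unfolding comonad_dom_def is_functor_def E1_def E0_def comm_square_def by fastforce+

lemma E1_idn [simp]:
  "comonad_dom C L \<Longrightarrow> f \<in> arr C \<Longrightarrow> X = dm C f \<Longrightarrow> Y = cd C f \<Longrightarrow>
   E1 L (f,f,idn C X,idn C Y) = idn C (E0 L f)"
  unfolding comonad_dom_def is_functor_def E1_def E0_def by fastforce

lemma E1_comp:
  "comonad_dom C L \<Longrightarrow> comm_square C f g h k \<Longrightarrow> comm_square C g g' h' k' \<Longrightarrow>
   cmp C (E1 L (g,g',h',k')) (E1 L (f,g,h,k)) = E1 L (f,g',cmp C h' h, cmp C k' k)"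
  unfolding comonad_dom_def is_functor_def E1_def comm_square_def
  by (metis (no_types, lifting) arrow_cat_simps(2,3,5))

lemma E1_comp_assoc:
  "comonad_dom C L \<Longrightarrow> comm_square C f g h k \<Longrightarrow> comm_square C g g' h' k' \<Longrightarrow>
   x \<in> arr C \<Longrightarrow> cd C x = E0 L f \<Longrightarrow>
   cmp C (E1 L (g,g',h',k')) (cmp C (E1 L (f,g,h,k)) x) = cmp C (E1 L (f,g',cmp C h' h, cmp C k' k)) x"
  by (rule comp_assoc_subst[OF E1_comp]) auto

lemma lam_arr [simp]: "comonad_dom C L \<Longrightarrow> f \<in> arr C \<Longrightarrow> lam L f \<in> arr C"
  and dm_lam [simp]: "comonad_dom C L \<Longrightarrow> f \<in> arr C \<Longrightarrow> dm C (lam L f) = dm C f"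
  and cd_lam [simp]: "comonad_dom C L \<Longrightarrow> f \<in> arr C \<Longrightarrow> cd C (lam L f) = E0 L f"
  and rho_arr [simp]: "comonad_dom C L \<Longrightarrow> f \<in> arr C \<Longrightarrow> rho L f \<in> arr C"
  and dm_rho [simp]: "comonad_dom C L \<Longrightarrow> f \<in> arr C \<Longrightarrow> dm C (rho L f) = E0 L f"
  and cd_rho [simp]: "comonad_dom C L \<Longrightarrow> f \<in> arr C \<Longrightarrow> cd C (rho L f) = cd C f"
  and sig_arr [simp]: "comonad_dom C L \<Longrightarrow> f \<in> arr C \<Longrightarrow> sig L f \<in> arr C"
  and dm_sig [simp]: "comonad_dom C L \<Longrightarrow> f \<in> arr C \<Longrightarrow> dm C (sig L f) = E0 L f"
  and cd_sig [simp]: "comonad_dom C L \<Longrightarrow> f \<in> arr C \<Longrightarrow> cd C (sig L f) = E0 L (lam L f)"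
  unfolding comonad_dom_def hom_def by auto

lemma lam_natural:
  "comonad_dom C L \<Longrightarrow> comm_square C f g h k \<Longrightarrow> cmp C (lam L g) h = cmp C (E1 L (f,g,h,k)) (lam L f)"
  and rho_natural:
  "comonad_dom C L \<Longrightarrow> comm_square C f g h k \<Longrightarrow> cmp C k (rho L f) = cmp C (rho L g) (E1 L (f,g,h,k))"
  and sig_natural:
  "comonad_dom C L \<Longrightarrow> comm_square C f g h k \<Longrightarrow>
   cmp C (sig L g) (E1 L (f,g,h,k)) = cmp C (E1 L (lam L f, lam L g, h, E1 L (f,g,h,k))) (sig L f)"
  unfolding comonad_dom_def comm_square_def by blast+

lemma rho_lam_sig [simp]:
  "comonad_dom C L \<Longrightarrow> f \<in> arr C \<Longrightarrow> cmp C (rho L (lam L f)) (sig L f) = idn C (E0 L f)"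
  unfolding comonad_dom_def by blast+

lemma comon_mor_arr [simp]: "comon_mor C L L' \<alpha> \<Longrightarrow> f \<in> arr C \<Longrightarrow> \<alpha> f \<in> arr C"
  and dm_comon_mor [simp]: "comon_mor C L L' \<alpha> \<Longrightarrow> f \<in> arr C \<Longrightarrow> dm C (\<alpha> f) = E0 L f"
  and cd_comon_mor [simp]: "comon_mor C L L' \<alpha> \<Longrightarrow> f \<in> arr C \<Longrightarrow> cd C (\<alpha> f) = E0 L' f"
  unfolding comon_mor_def hom_def by auto

lemma comon_mor_natural:
  "comon_mor C L L' \<alpha> \<Longrightarrow> comm_square C f g h k \<Longrightarrow>
   cmp C (\<alpha> g) (E1 L (f,g,h,k)) = cmp C (E1 L' (f,g,h,k)) (\<alpha> f)"
  unfolding comon_mor_def comm_square_def by blast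

lemma comon_mor_lam [simp]: "comon_mor C L L' \<alpha> \<Longrightarrow> f \<in> arr C \<Longrightarrow> cmp C (\<alpha> f) (lam L f) = lam L' f"
  and comon_mor_rho [simp]: "comon_mor C L L' \<alpha> \<Longrightarrow> f \<in> arr C \<Longrightarrow> cmp C (rho L' f) (\<alpha> f) = rho L f"
  and comon_mor_sig:
    "comon_mor C L L' \<alpha> \<Longrightarrow> f \<in> arr C \<Longrightarrow> cmp C (sig L' f) (\<alpha> f)
      = cmp C (\<alpha> (lam L' f)) (cmp C (E1 L (lam L f, lam L' f, idn C (dm C f), \<alpha> f)) (sig L f))"
  unfolding comon_mor_def by blast+

lemma LMap_obj_iff:
  "(f,s) \<in> obj (LMap C L) \<longleftrightarrow> f \<in> arr C \<and> s \<in> arr C \<and> dm C s = cd C f \<and> cd C s = E0 L f \<and>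
     cmp C s f = lam L f \<and> cmp C (rho L f) s = idn C (cd C f) \<and>
     cmp C (sig L f) s = cmp C (E1 L (f, lam L f, idn C (dm C f), s)) s"
  unfolding LMap_def Let_def hom_def by auto

lemma LMap_objD:
  "(f,s) \<in> obj (LMap C L) \<Longrightarrow> f \<in> arr C \<and> s \<in> arr C \<and> dm C s = cd C f \<and> cd C s = E0 L f"
  unfolding LMap_obj_iff by auto

lemma LMap_arr_iff:
  "((f,s),(g,t),h,k) \<in> arr (LMap C L) \<longleftrightarrow> (f,s) \<in> obj (LMap C L) \<and> (g,t) \<in> obj (LMap C L) \<and>
     comm_square C f g h k \<and> cmp C t k = cmp C (E1 L (f,g,h,k)) s"
  unfolding LMap_def Let_def comm_square_def by auto

lemma LMap_arrD:
  "((f,s),(f',s'),h,k) \<in> arr (LMap C L) \<Longrightarrow> (f,s) \<in> obj (LMap C L) \<and> (f',s') \<in> obj (LMap C L) \<and>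
     f \<in> arr C \<and> f' \<in> arr C \<and> h \<in> arr C \<and> k \<in> arr C \<and>
     dm C h = dm C f \<and> cd C h = dm C f' \<and> dm C k = cd C f \<and> cd C k = cd C f'"
  unfolding LMap_arr_iff using comm_square_arrs by blast

lemma LMap_comp_arr:
  assumes L: "comonad_dom C L"
    and x: "((f,s),(g,t),h,k) \<in> arr (LMap C L)" and y: "((g,t),(u,v),h',k') \<in> arr (LMap C L)"
  shows "((f,s),(u,v),cmp C h' h,cmp C k' k) \<in> arr (LMap C L)"
proof -
  have q1: "comm_square C f g h k" and q2: "comm_square C g u h' k'"
    and e1: "cmp C t k = cmp C (E1 L (f,g,h,k)) s" and e2: "cmp C v k' = cmp C (E1 L (g,u,h',k')) t"
    and objs: "(f,s) \<in> obj (LMap C L)" "(g,t) \<in> obj (LMap C L)" "(u,v) \<in> obj (LMap C L)"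
    using x y unfolding LMap_arr_iff by auto
  note sq = comm_square_arrs[OF q1] comm_square_arrs[OF q2]
    and sec = LMap_objD[OF objs(1)] LMap_objD[OF objs(2)] LMap_objD[OF objs(3)]
  have "cmp C v (cmp C k' k) = cmp C (cmp C v k') k"
    using sq sec by simp
  also have "\<dots> = cmp C (E1 L (g,u,h',k')) (cmp C t k)"
    unfolding e2 using sq sec L q2 by simp
  also have "\<dots> = cmp C (E1 L (f,u,cmp C h' h,cmp C k' k)) s"
    unfolding e1 using E1_comp_assoc[OF L q1 q2] sec by simp
  finally show ?thesis
    using objs comm_square_comp[OF q1 q2] unfolding LMap_arr_iff by simp
qed

lemma LMap_idn_arr: "comonad_dom C L \<Longrightarrow> (f,s) \<in> obj (LMap C L) \<Longrightarrow> idn (LMap C L) (f,s) \<in> arr (LMap C L)"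
  by (simp add: LMap_arr_iff LMap_obj_iff)

lemma LMap_category: "comonad_dom C L \<Longrightarrow> category (LMap C L)"
  unfolding category_def
  by (auto intro: LMap_comp_arr LMap_idn_arr) (auto dest!: LMap_arrD)

lemma GU_is_functor: "is_functor (LMap C L) (arrow_cat C) GU"
  unfolding is_functor_def
  by (auto simp: LMap_obj_iff LMap_arr_iff comm_square_def)

lemma over_cat_Gob: "comonad_dom C L \<Longrightarrow> over_cat C (Gob C L)"
  unfolding over_cat_def using LMap_category GU_is_functor by simp

lemma Gmor_obj:
  assumes L: "comonad_dom C L" and L': "comonad_dom C L'" and \<alpha>: "comon_mor C L L' \<alpha>"
    and x: "(f,s) \<in> obj (LMap C L)"
  shows "(f, cmp C (\<alpha> f) s) \<in> obj (LMap C L')"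
proof -
  have f: "f \<in> arr C" and s: "s \<in> arr C" "dm C s = cd C f" "cd C s = E0 L f"
    and sf: "cmp C s f = lam L f" and rs: "cmp C (rho L f) s = idn C (cd C f)"
    and ss: "cmp C (sig L f) s = cmp C (E1 L (f, lam L f, idn C (dm C f), s)) s"
    using x unfolding LMap_obj_iff by auto
  note [simp] = f s L L'
  have q1: "comm_square C f (lam L f) (idn C (dm C f)) s"
    using sf unfolding comm_square_iff by simp
  have q2: "comm_square C (lam L f) (lam L' f) (idn C (dm C f)) (\<alpha> f)"
    using \<alpha> unfolding comm_square_iff by simp
  have q3: "comm_square C f (lam L' f) (idn C (dm C f)) (cmp C (\<alpha> f) s)"
    using comm_square_comp[OF q1 q2] by simp
  have "cmp C (sig L' f) (cmp C (\<alpha> f) s) = cmp C (cmp C (sig L' f) (\<alpha> f)) s"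
    using \<alpha> by simp
  also have "\<dots> = cmp C (\<alpha> (lam L' f))
      (cmp C (E1 L (lam L f, lam L' f, idn C (dm C f), \<alpha> f)) (cmp C (sig L f) s))"
    using comon_mor_sig[OF \<alpha> f] q2 \<alpha> by simp
  also have "\<dots> = cmp C (\<alpha> (lam L' f)) (cmp C (E1 L (f, lam L' f, idn C (dm C f), cmp C (\<alpha> f) s)) s)"
    unfolding ss using q1 q2 \<alpha> by (simp add: comp_assoc_subst[OF E1_comp[OF L q1 q2]])
  also have "\<dots> = cmp C (cmp C (\<alpha> (lam L' f)) (E1 L (f, lam L' f, idn C (dm C f), cmp C (\<alpha> f) s))) s"
    using q3 \<alpha> by simp
  also have "\<dots> = cmp C (E1 L' (f, lam L' f, idn C (dm C f), cmp C (\<alpha> f) s)) (cmp C (\<alpha> f) s)"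
    unfolding comon_mor_natural[OF \<alpha> q3] using q3 \<alpha> by simp
  moreover have "cmp C (rho L' f) (cmp C (\<alpha> f) s) = idn C (cd C f)"
    using comp_assoc_subst[OF comon_mor_rho[OF \<alpha> f]] rs \<alpha> by simp
  ultimately show ?thesis
    using q3 \<alpha> unfolding LMap_obj_iff comm_square_iff by simp
qed

lemma Gmor_arr:
  assumes L: "comonad_dom C L" and L': "comonad_dom C L'" and \<alpha>: "comon_mor C L L' \<alpha>"
    and x: "((f,s),(g,t),h,k) \<in> arr (LMap C L)"
  shows "((f, cmp C (\<alpha> f) s),(g, cmp C (\<alpha> g) t),h,k) \<in> arr (LMap C L')"
proof -
  have objs: "(f,s) \<in> obj (LMap C L)" "(g,t) \<in> obj (LMap C L)" and q: "comm_square C f g h k"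
    and e: "cmp C t k = cmp C (E1 L (f,g,h,k)) s"
    using x unfolding LMap_arr_iff by auto
  note arrs = LMap_objD[OF objs(1)] LMap_objD[OF objs(2)] comm_square_arrs[OF q]
  have "cmp C (cmp C (\<alpha> g) t) k = cmp C (\<alpha> g) (cmp C (E1 L (f,g,h,k)) s)"
    unfolding e[symmetric] using arrs \<alpha> by simp
  also have "\<dots> = cmp C (E1 L' (f,g,h,k)) (cmp C (\<alpha> f) s)"
    using comp_assoc_cong[OF comon_mor_natural[OF \<alpha> q]] q arrs \<alpha> L L' by simp
  finally show ?thesis
    unfolding LMap_arr_iff using Gmor_obj[OF L L' \<alpha>] objs q by simp
qed

lemma over_functor_Gmor:
  assumes "comonad_dom C L" "comonad_dom C L'" "comon_mor C L L' \<alpha>"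
  shows "over_functor (Gob C L) (Gob C L') (Gmor C \<alpha>)"
  unfolding over_functor_def is_functor_def
  using Gmor_obj[OF assms] Gmor_arr[OF assms] by auto

end

section \<open>Sections of composites\<close>

definition lmap_lift :: "('o,'m) cat \<Rightarrow> ('o,'m) comon \<Rightarrow> 'm \<Rightarrow> 'm \<Rightarrow> 'm \<Rightarrow> 'm" where
  "lmap_lift C L f s g = cmp C (E1 L (f, cmp C g f, idn C (dm C f), g)) s"

definition composite_section ::
    "('o,'m) cat \<Rightarrow> ('o,'m) comon \<Rightarrow> ('o,'m) comon \<Rightarrow> 'm \<Rightarrow> 'm \<Rightarrow> 'm \<Rightarrow> 'm \<Rightarrow> 'm" where
  "composite_section C L2 L1 f s g t =
     cmp C (E1 L2 (g, rho L1 (cmp C g f), lmap_lift C L1 f s g, idn C (cd C g))) t"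

context ambient_category
begin

context
  fixes L f s g
  assumes L: "comonad_dom C L" and lmap: "(f,s) \<in> obj (LMap C L)"
    and g: "g \<in> arr C" and composable: "cd C f = dm C g"
begin

private lemma lmap_data:
  "f \<in> arr C" "s \<in> arr C" "dm C s = cd C f" "cd C s = E0 L f"
  "g \<in> arr C" "cd C f = dm C g"
  "cmp C s f = lam L f" "cmp C (rho L f) s = idn C (cd C f)"
  "cmp C (sig L f) s = cmp C (E1 L (f, lam L f, idn C (dm C f), s)) s"
  using lmap g composable unfolding LMap_obj_iff by auto

private lemma square_gf: "comm_square C f (cmp C g f) (idn C (dm C f)) g"
  using comm_square_precomp lmap_data by blast

lemma lmap_lift_arr: "lmap_lift C L f s g \<in> arr C"
  and dm_lmap_lift: "dm C (lmap_lift C L f s g) = cd C f"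
  and cd_lmap_lift: "cd C (lmap_lift C L f s g) = E0 L (cmp C g f)"
  unfolding lmap_lift_def using square_gf L lmap_data by simp_all

lemma rho_lmap_lift: "cmp C (rho L (cmp C g f)) (lmap_lift C L f s g) = g"
  unfolding lmap_lift_def
  using comp_assoc_subst[OF rho_natural[OF L square_gf, symmetric]] square_gf L lmap_data by simp

lemma comm_square_lmap_lift: "comm_square C g (rho L (cmp C g f)) (lmap_lift C L f s g) (idn C (cd C g))"
  using rho_lmap_lift lmap_lift_arr dm_lmap_lift cd_lmap_lift L lmap_data
  unfolding comm_square_iff by simp

lemma lmap_lift_comp: "cmp C (lmap_lift C L f s g) f = lam L (cmp C g f)"
  unfolding lmap_lift_def using lam_natural[OF L square_gf] square_gf L lmap_data by simp

lemma sig_lmap_lift: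
  "cmp C (sig L (cmp C g f)) (lmap_lift C L f s g)
     = cmp C (E1 L (f, lam L (cmp C g f), idn C (dm C f), lmap_lift C L f s g)) s"
proof -
  have sq_lam: "comm_square C (lam L f) (lam L (cmp C g f)) (idn C (dm C f)) (E1 L (f, cmp C g f, idn C (dm C f), g))"
    unfolding comm_square_iff using lam_natural[OF L square_gf] square_gf L lmap_data by simp
  have sq_s: "comm_square C f (lam L f) (idn C (dm C f)) s"
    unfolding comm_square_iff using L lmap_data by simp
  have "cmp C (sig L (cmp C g f)) (lmap_lift C L f s g)
      = cmp C (E1 L (lam L f, lam L (cmp C g f), idn C (dm C f), E1 L (f, cmp C g f, idn C (dm C f), g)))
          (cmp C (sig L f) s)"
    unfolding lmap_lift_def using comp_assoc_cong[OF sig_natural[OF L square_gf]] square_gf sq_lam L lmap_data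
    by simp
  also have "\<dots> = cmp C (E1 L (f, lam L (cmp C g f), idn C (dm C f), lmap_lift C L f s g)) s"
    unfolding lmap_data(9) lmap_lift_def using E1_comp_assoc[OF L sq_s sq_lam] L lmap_data by simp
  finally show ?thesis .
qed

lemma lmap_lift_cmp:
  assumes h: "h \<in> arr C" "cd C g = dm C h"
  shows "lmap_lift C L f s (cmp C h g)
    = cmp C (E1 L (cmp C g f, cmp C h (cmp C g f), idn C (dm C f), h)) (lmap_lift C L f s g)"
proof -
  have "comm_square C (cmp C g f) (cmp C h (cmp C g f)) (idn C (dm C f)) h"
    using comm_square_precomp[of "cmp C g f" h] h lmap_data by simp
  then show ?thesis
    unfolding lmap_lift_def using E1_comp_assoc[OF L square_gf] h L lmap_data by simp
qed

lemma lmap_lift_comon_mor: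
  assumes L': "comonad_dom C L'" and \<alpha>: "comon_mor C L L' \<alpha>"
  shows "lmap_lift C L' f (cmp C (\<alpha> f) s) g = cmp C (\<alpha> (cmp C g f)) (lmap_lift C L f s g)"
  unfolding lmap_lift_def
  using comp_assoc_cong[OF comon_mor_natural[OF \<alpha> square_gf]] square_gf \<alpha> L L' lmap_data by simp

end

lemma lmap_lift_square:
  assumes L: "comonad_dom C L" and lmap_arr: "((f,s),(f',s'),h,k) \<in> arr (LMap C L)"
    and sq: "comm_square C g g' k k'"
  shows "cmp C (lmap_lift C L f' s' g') k = cmp C (E1 L (cmp C g f, cmp C g' f', h, k')) (lmap_lift C L f s g)"
proof -
  have sq_f: "comm_square C f f' h k" and e: "cmp C s' k = cmp C (E1 L (f,f',h,k)) s"
    and objs: "(f,s) \<in> obj (LMap C L)" "(f',s') \<in> obj (LMap C L)"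
    using lmap_arr unfolding LMap_arr_iff by auto
  note arrs = comm_square_arrs[OF sq_f] comm_square_arrs[OF sq] LMap_objD[OF objs(1)] LMap_objD[OF objs(2)]
  have sq_gf: "comm_square C (cmp C g f) (cmp C g' f') h k'"
    using comm_square_paste[OF sq_f sq] .
  have "cmp C (lmap_lift C L f' s' g') k = cmp C (E1 L (f', cmp C g' f', idn C (dm C f'), g')) (cmp C s' k)"
    unfolding lmap_lift_def using comm_square_precomp[of f' g'] arrs L by simp
  also have "\<dots> = cmp C (E1 L (f, cmp C g' f', h, cmp C g' k)) s"
    unfolding e using E1_comp_assoc[OF L sq_f comm_square_precomp[of f' g']] arrs by simp
  also have "\<dots> = cmp C (E1 L (cmp C g f, cmp C g' f', h, k')) (lmap_lift C L f s g)"
    unfolding lmap_lift_def comm_square_commutes[OF sq]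
    using E1_comp_assoc[OF L comm_square_precomp[of f g] sq_gf] arrs by simp
  finally show ?thesis .
qed

context
  fixes L1 L2 f s g t
  assumes L1: "comonad_dom C L1" and L2: "comonad_dom C L2"
    and lmap1: "(f,s) \<in> obj (LMap C L1)" and lmap2: "(g,t) \<in> obj (LMap C L2)"
    and composable: "cd C f = dm C g"
begin

private lemma arrs:
  "f \<in> arr C" "s \<in> arr C" "dm C s = cd C f" "cd C s = E0 L1 f"
  "g \<in> arr C" "t \<in> arr C" "dm C t = cd C g" "cd C t = E0 L2 g" "cd C f = dm C g"
  "cmp C g f \<in> arr C" "dm C (cmp C g f) = dm C f" "cd C (cmp C g f) = cd C g"
  "lmap_lift C L1 f s g \<in> arr C" "dm C (lmap_lift C L1 f s g) = cd C f"
  "cd C (lmap_lift C L1 f s g) = E0 L1 (cmp C g f)"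
  using LMap_objD[OF lmap1] LMap_objD[OF lmap2] composable
    lmap_lift_arr[OF L1 lmap1] dm_lmap_lift[OF L1 lmap1] cd_lmap_lift[OF L1 lmap1]
  by auto

private lemma lmap2_data:
  "cmp C t g = lam L2 g" "cmp C (rho L2 g) t = idn C (cd C g)"
  "cmp C (sig L2 g) t = cmp C (E1 L2 (g, lam L2 g, idn C (dm C g), t)) t"
  using lmap2 unfolding LMap_obj_iff by auto

private lemma square_lift:
  "comm_square C g (rho L1 (cmp C g f)) (lmap_lift C L1 f s g) (idn C (cd C g))"
  using comm_square_lmap_lift[OF L1 lmap1 arrs(5) composable] .

lemma composite_section_arr: "composite_section C L2 L1 f s g t \<in> arr C"
  and dm_composite_section: "dm C (composite_section C L2 L1 f s g t) = cd C g"
  and cd_composite_section: "cd C (composite_section C L2 L1 f s g t) = E0 L2 (rho L1 (cmp C g f))"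
  unfolding composite_section_def using square_lift L1 L2 arrs by simp_all

lemma composite_section_comp_right:
  "cmp C (composite_section C L2 L1 f s g t) g = cmp C (lam L2 (rho L1 (cmp C g f))) (lmap_lift C L1 f s g)"
  unfolding composite_section_def
  using lam_natural[OF L2 square_lift] square_lift lmap2_data L1 L2 arrs by simp

lemma composite_section_comp:
  "cmp C (composite_section C L2 L1 f s g t) (cmp C g f) = lam (tens C L2 L1) (cmp C g f)"
proof -
  have "cmp C (composite_section C L2 L1 f s g t) (cmp C g f)
      = cmp C (cmp C (composite_section C L2 L1 f s g t) g) f"
    using composite_section_arr dm_composite_section arrs by simp
  also have "\<dots> = cmp C (lam L2 (rho L1 (cmp C g f))) (cmp C (lmap_lift C L1 f s g) f)"
    unfolding composite_section_comp_right using L1 L2 arrs by simp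
  also have "\<dots> = lam (tens C L2 L1) (cmp C g f)"
    using lmap_lift_comp[OF L1 lmap1 arrs(5) composable] by simp
  finally show ?thesis .
qed

lemma rho_composite_section:
  "cmp C (rho (tens C L2 L1) (cmp C g f)) (composite_section C L2 L1 f s g t) = idn C (cd C (cmp C g f))"
  unfolding composite_section_def
  using comp_assoc_subst[OF rho_natural[OF L2 square_lift, symmetric]] square_lift lmap2_data L1 L2 arrs
  by simp

private lemma square_t: "comm_square C g (lam L2 g) (idn C (dm C g)) t"
  using lmap2_data L2 arrs unfolding comm_square_iff by simp

private lemma square_lam_lift:
  "comm_square C (lam L2 g) (lam L2 (rho L1 (cmp C g f))) (lmap_lift C L1 f s g)
     (E1 L2 (g, rho L1 (cmp C g f), lmap_lift C L1 f s g, idn C (cd C g)))"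
  by (rule comm_squareI) (use lam_natural[OF L2 square_lift] square_lift L1 L2 arrs in simp_all)

private lemma square_lam_tens:
  "comm_square C (lam L1 (cmp C g f)) (lam (tens C L2 L1) (cmp C g f)) (idn C (dm C f))
     (lam L2 (rho L1 (cmp C g f)))"
  using L1 L2 arrs unfolding comm_square_iff by simp

private lemma square_sig_tens_inner:
  "comm_square C (lam L2 (rho L1 (cmp C g f))) (cmp C (lam L2 (rho L1 (cmp C g f))) (rho L1 (lam L1 (cmp C g f))))
     (sig L1 (cmp C g f)) (idn C (E0 L2 (rho L1 (cmp C g f))))"
  using L1 L2 arrs unfolding comm_square_iff by simp

private lemma square_sig_tens_outer:
  "comm_square C (cmp C (lam L2 (rho L1 (cmp C g f))) (rho L1 (lam L1 (cmp C g f))))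
     (rho L1 (lam (tens C L2 L1) (cmp C g f)))
     (E1 L1 (lam L1 (cmp C g f), lam (tens C L2 L1) (cmp C g f), idn C (dm C f), lam L2 (rho L1 (cmp C g f))))
     (idn C (E0 L2 (rho L1 (cmp C g f))))"
  by (rule comm_squareI) (use rho_natural[OF L1 square_lam_tens] square_lam_tens L1 L2 arrs in simp_all)

private lemma square_sec:
  "comm_square C (cmp C g f) (lam (tens C L2 L1) (cmp C g f)) (idn C (dm C f)) (composite_section C L2 L1 f s g t)"
  using composite_section_comp composite_section_arr dm_composite_section cd_composite_section L1 L2 arrs
  unfolding comm_square_iff by simp

private lemma square_rho_sec:
  "comm_square C (rho L1 (cmp C g f)) (rho L1 (lam (tens C L2 L1) (cmp C g f)))
     (E1 L1 (cmp C g f, lam (tens C L2 L1) (cmp C g f), idn C (dm C f), composite_section C L2 L1 f s g t))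
     (composite_section C L2 L1 f s g t)"
  by (rule comm_squareI)
    (use rho_natural[OF L1 square_sec] square_sec composite_section_arr dm_composite_section
      cd_composite_section L1 L2 arrs in simp_all)

lemma E1_sig_lmap_lift:
  "cmp C (E1 L1 (lam L1 (cmp C g f), lam (tens C L2 L1) (cmp C g f), idn C (dm C f), lam L2 (rho L1 (cmp C g f))))
      (cmp C (sig L1 (cmp C g f)) (lmap_lift C L1 f s g))
   = cmp C (E1 L1 (cmp C g f, lam (tens C L2 L1) (cmp C g f), idn C (dm C f), composite_section C L2 L1 f s g t))
      (lmap_lift C L1 f s g)"
  (is "cmp C (E1 L1 (?lF, ?lT, ?i, ?l2)) _ = cmp C (E1 L1 (?F, _, _, ?S)) ?a")
proof -
  have sq_lift: "comm_square C f ?lF ?i ?a"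
    using lmap_lift_comp[OF L1 lmap1 arrs(5) composable] L1 arrs unfolding comm_square_iff by simp
  have "cmp C (E1 L1 (?lF, ?lT, ?i, ?l2)) (cmp C (sig L1 ?F) ?a)
      = cmp C (E1 L1 (?lF, ?lT, ?i, ?l2)) (cmp C (E1 L1 (f, ?lF, ?i, ?a)) s)"
    unfolding sig_lmap_lift[OF L1 lmap1 arrs(5) composable] ..
  also have "\<dots> = cmp C (E1 L1 (f, ?lT, ?i, cmp C ?l2 ?a)) s"
    using E1_comp_assoc[OF L1 sq_lift square_lam_tens] L1 arrs by simp
  also have "\<dots> = cmp C (E1 L1 (f, ?lT, ?i, cmp C ?S g)) s"
    unfolding composite_section_comp_right ..
  also have "\<dots> = cmp C (E1 L1 (?F, ?lT, ?i, ?S)) ?a"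
    unfolding lmap_lift_def
    using E1_comp_assoc[OF L1 comm_square_precomp[of f g] square_sec] L1 arrs by simp
  finally show ?thesis .
qed

lemma sig_composite_section:
  "cmp C (sig (tens C L2 L1) (cmp C g f)) (composite_section C L2 L1 f s g t)
   = cmp C (E1 (tens C L2 L1) (cmp C g f, lam (tens C L2 L1) (cmp C g f), idn C (dm C (cmp C g f)),
                               composite_section C L2 L1 f s g t))
       (composite_section C L2 L1 f s g t)"
proof -
  let ?F = "cmp C g f" and ?a = "lmap_lift C L1 f s g" and ?S = "composite_section C L2 L1 f s g t"
  let ?lT = "lam (tens C L2 L1) ?F" and ?i = "idn C (dm C f)"
    and ?tF = "cmp C (lam L2 (rho L1 ?F)) (rho L1 (lam L1 ?F))" and ?e = "idn C (E0 L2 (rho L1 ?F))"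
  let ?u = "E1 L2 (g, rho L1 ?F, ?a, idn C (cd C g))"
  have sq_1: "comm_square C g (lam L2 (rho L1 ?F)) ?a (cmp C ?u t)"
    using comm_square_comp[OF square_t square_lam_lift] arrs by simp
  have sq_2: "comm_square C g ?tF (cmp C (sig L1 ?F) ?a) (cmp C ?u t)"
    using comm_square_comp[OF sq_1 square_sig_tens_inner] square_lift L1 L2 arrs by simp
  have "cmp C (sig (tens C L2 L1) ?F) ?S
      = cmp C (E1 L2 (?tF, rho L1 ?lT, E1 L1 (lam L1 ?F, ?lT, ?i, lam L2 (rho L1 ?F)), ?e))
          (cmp C (E1 L2 (lam L2 (rho L1 ?F), ?tF, sig L1 ?F, ?e)) (cmp C (sig L2 (rho L1 ?F)) (cmp C ?u t)))"
    unfolding sig_tens composite_section_def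
    using square_sig_tens_outer square_sig_tens_inner square_lift L1 L2 arrs by simp
  also have "\<dots> = cmp C (E1 L2 (?tF, rho L1 ?lT, E1 L1 (lam L1 ?F, ?lT, ?i, lam L2 (rho L1 ?F)), ?e))
          (cmp C (E1 L2 (lam L2 (rho L1 ?F), ?tF, sig L1 ?F, ?e))
            (cmp C (E1 L2 (lam L2 g, lam L2 (rho L1 ?F), ?a, ?u)) (cmp C (sig L2 g) t)))"
    using comp_assoc_cong[OF sig_natural[OF L2 square_lift]] square_lift square_lam_lift L1 L2 arrs by simp
  also have "\<dots> = cmp C (E1 L2 (g, rho L1 ?lT,
        cmp C (E1 L1 (lam L1 ?F, ?lT, ?i, lam L2 (rho L1 ?F))) (cmp C (sig L1 ?F) ?a), ?S)) t"
    unfolding lmap2_data(3) composite_section_def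
    using E1_comp_assoc[OF L2 square_t square_lam_lift] E1_comp_assoc[OF L2 sq_1 square_sig_tens_inner]
      E1_comp_assoc[OF L2 sq_2 square_sig_tens_outer] square_lift square_t sq_1 sq_2 L1 L2 arrs
    by simp
  also have "\<dots> = cmp C (E1 L2 (g, rho L1 ?lT, cmp C (E1 L1 (?F, ?lT, ?i, ?S)) ?a, ?S)) t"
    unfolding E1_sig_lmap_lift ..
  also have "\<dots> = cmp C (E1 (tens C L2 L1) (?F, ?lT, idn C (dm C ?F), ?S)) ?S"
    using E1_comp_assoc[OF L2 square_lift square_rho_sec] square_lift composite_section_arr L1 L2 arrs
    unfolding composite_section_def by simp
  finally show ?thesis .
qed

lemma composite_section_LMap_obj:
  "(cmp C g f, composite_section C L2 L1 f s g t) \<in> obj (LMap C (tens C L2 L1))"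
  unfolding LMap_obj_iff
  using composite_section_comp rho_composite_section sig_composite_section
    composite_section_arr dm_composite_section cd_composite_section arrs
  by simp

end

lemma composite_section_square:
  assumes L1: "comonad_dom C L1" and L2: "comonad_dom C L2"
    and arr1: "((f,s),(f',s'),h,k) \<in> arr (LMap C L1)" and arr2: "((g,t),(g',t'),k,k') \<in> arr (LMap C L2)"
  shows "cmp C (composite_section C L2 L1 f' s' g' t') k'
    = cmp C (E1 (tens C L2 L1) (cmp C g f, cmp C g' f', h, k')) (composite_section C L2 L1 f s g t)"
proof -
  have sq1: "comm_square C f f' h k" and sq2: "comm_square C g g' k k'"
    and e2: "cmp C t' k' = cmp C (E1 L2 (g,g',k,k')) t"
    and objs: "(f,s) \<in> obj (LMap C L1)" "(f',s') \<in> obj (LMap C L1)"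
      "(g,t) \<in> obj (LMap C L2)" "(g',t') \<in> obj (LMap C L2)"
    using arr1 arr2 unfolding LMap_arr_iff by auto
  note arrs = comm_square_arrs[OF sq1] comm_square_arrs[OF sq2]
    LMap_objD[OF objs(1)] LMap_objD[OF objs(2)] LMap_objD[OF objs(3)] LMap_objD[OF objs(4)]
  note lift = comm_square_lmap_lift[OF L1 objs(1)] comm_square_lmap_lift[OF L1 objs(2)]
  have sq_gf: "comm_square C (cmp C g f) (cmp C g' f') h k'"
    using comm_square_paste[OF sq1 sq2] .
  have sq_rho: "comm_square C (rho L1 (cmp C g f)) (rho L1 (cmp C g' f')) (E1 L1 (cmp C g f, cmp C g' f', h, k')) k'"
    by (rule comm_squareI) (use rho_natural[OF L1 sq_gf] sq_gf arrs L1 in simp_all)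
  have "cmp C (composite_section C L2 L1 f' s' g' t') k'
      = cmp C (E1 L2 (g', rho L1 (cmp C g' f'), lmap_lift C L1 f' s' g', idn C (cd C g'))) (cmp C t' k')"
    unfolding composite_section_def using lift arrs L2 by simp
  also have "\<dots> = cmp C (E1 L2 (g, rho L1 (cmp C g' f'), cmp C (lmap_lift C L1 f' s' g') k, k')) t"
    unfolding e2 using E1_comp_assoc[OF L2 sq2 lift(2)] lift arrs by simp
  also have "\<dots> = cmp C (E1 L2 (g, rho L1 (cmp C g' f'),
      cmp C (E1 L1 (cmp C g f, cmp C g' f', h, k')) (lmap_lift C L1 f s g), k')) t"
    unfolding lmap_lift_square[OF L1 arr1 sq2] ..
  also have "\<dots> = cmp C (E1 (tens C L2 L1) (cmp C g f, cmp C g' f', h, k')) (composite_section C L2 L1 f s g t)"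
    unfolding composite_section_def using E1_comp_assoc[OF L2 lift(1) sq_rho] lift arrs by simp
  finally show ?thesis .
qed

lemma composite_section_comon_mor:
  assumes L1: "comonad_dom C L1" and L2: "comonad_dom C L2"
    and L1': "comonad_dom C L1'" and L2': "comonad_dom C L2'"
    and \<beta>: "comon_mor C L2 L2' \<beta>" and \<alpha>: "comon_mor C L1 L1' \<alpha>"
    and lmap1: "(f,s) \<in> obj (LMap C L1)" and lmap2: "(g,t) \<in> obj (LMap C L2)"
    and composable: "cd C f = dm C g"
  shows "composite_section C L2' L1' f (cmp C (\<alpha> f) s) g (cmp C (\<beta> g) t)
    = cmp C (tens_mor C L2 L1 L1' \<beta> \<alpha> (cmp C g f)) (composite_section C L2 L1 f s g t)"
proof -
  let ?F = "cmp C g f" and ?a = "lmap_lift C L1 f s g"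
  have g: "g \<in> arr C"
    using LMap_objD[OF lmap2] by simp
  note arrs = LMap_objD[OF lmap1] LMap_objD[OF lmap2] composable
    lmap_lift_arr[OF L1 lmap1 g composable] dm_lmap_lift[OF L1 lmap1 g composable]
    cd_lmap_lift[OF L1 lmap1 g composable]
  note lift = comm_square_lmap_lift[OF L1 lmap1 g composable]
  have sq_\<alpha>: "comm_square C (rho L1 ?F) (rho L1' ?F) (\<alpha> ?F) (idn C (cd C g))"
    by (rule comm_squareI) (use \<alpha> arrs L1 L1' in simp_all)
  have sq_\<alpha>_lift: "comm_square C g (rho L1' ?F) (cmp C (\<alpha> ?F) ?a) (idn C (cd C g))"
    using comm_square_comp[OF lift sq_\<alpha>] arrs by simp
  have "cmp C (tens_mor C L2 L1 L1' \<beta> \<alpha> ?F) (composite_section C L2 L1 f s g t)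
      = cmp C (\<beta> (rho L1' ?F)) (cmp C (E1 L2 (rho L1 ?F, rho L1' ?F, \<alpha> ?F, idn C (cd C g)))
          (cmp C (E1 L2 (g, rho L1 ?F, ?a, idn C (cd C g))) t))"
    unfolding tens_mor_def composite_section_def using sq_\<alpha> lift \<beta> arrs L1 L2 L1' by simp
  also have "\<dots> = cmp C (\<beta> (rho L1' ?F)) (cmp C (E1 L2 (g, rho L1' ?F, cmp C (\<alpha> ?F) ?a, idn C (cd C g))) t)"
    using E1_comp_assoc[OF L2 lift sq_\<alpha>] lift arrs by simp
  also have "\<dots> = cmp C (E1 L2' (g, rho L1' ?F, cmp C (\<alpha> ?F) ?a, idn C (cd C g))) (cmp C (\<beta> g) t)"
    using comp_assoc_cong[OF comon_mor_natural[OF \<beta> sq_\<alpha>_lift]] sq_\<alpha>_lift \<beta> arrs L1' L2 L2' by simp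
  also have "\<dots> = composite_section C L2' L1' f (cmp C (\<alpha> f) s) g (cmp C (\<beta> g) t)"
    unfolding composite_section_def lmap_lift_comon_mor[OF L1 lmap1 g composable L1' \<alpha>] ..
  finally show ?thesis ..
qed

context
  fixes L1 L2 L3 f s g t h u
  assumes L1: "comonad_dom C L1" and L2: "comonad_dom C L2" and L3: "comonad_dom C L3"
    and lmap1: "(f,s) \<in> obj (LMap C L1)" and lmap2: "(g,t) \<in> obj (LMap C L2)"
    and lmap3: "(h,u) \<in> obj (LMap C L3)"
    and fg: "cd C f = dm C g" and gh: "cd C g = dm C h"
begin

private lemma arrs3:
  "f \<in> arr C" "g \<in> arr C" "h \<in> arr C" "s \<in> arr C" "t \<in> arr C" "u \<in> arr C"
  "dm C s = cd C f" "dm C t = cd C g" "dm C u = cd C h"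
  "cd C s = E0 L1 f" "cd C t = E0 L2 g" "cd C u = E0 L3 h" "cd C f = dm C g" "cd C g = dm C h"
  "cmp C h g \<in> arr C" "cd C f = dm C (cmp C h g)"
  using LMap_objD[OF lmap1] LMap_objD[OF lmap2] LMap_objD[OF lmap3] fg gh by simp_all

private lemma lift_arrs:
  "lmap_lift C L1 f s (cmp C h g) \<in> arr C" "dm C (lmap_lift C L1 f s (cmp C h g)) = cd C f"
  "cd C (lmap_lift C L1 f s (cmp C h g)) = E0 L1 (cmp C (cmp C h g) f)"
  "lmap_lift C L1 f s g \<in> arr C" "dm C (lmap_lift C L1 f s g) = cd C f"
  "cd C (lmap_lift C L1 f s g) = E0 L1 (cmp C g f)"
  "lmap_lift C L2 g t h \<in> arr C" "dm C (lmap_lift C L2 g t h) = cd C g"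
  "cd C (lmap_lift C L2 g t h) = E0 L2 (cmp C h g)"
  using lmap_lift_arr dm_lmap_lift cd_lmap_lift L1 L2 lmap1 lmap2 arrs3 by simp_all

private lemma square_lift_hg:
  "comm_square C (cmp C h g) (rho L1 (cmp C h (cmp C g f))) (lmap_lift C L1 f s (cmp C h g)) (idn C (cd C h))"
  using comm_square_lmap_lift[OF L1 lmap1 arrs3(15,16)] arrs3 L1 by simp

private lemma square_lift_g:
  "comm_square C g (rho L1 (cmp C g f)) (lmap_lift C L1 f s g) (idn C (cd C g))"
  by (rule comm_square_lmap_lift[OF L1 lmap1 arrs3(2) fg])

private lemma square_lift_h:
  "comm_square C h (rho L2 (cmp C h g)) (lmap_lift C L2 g t h) (idn C (cd C h))"
  by (rule comm_square_lmap_lift[OF L2 lmap2 arrs3(3) gh])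

private lemma square_rho_L2:
  "comm_square C (rho L2 (cmp C h g)) (rho L2 (rho L1 (cmp C h (cmp C g f))))
     (E1 L2 (cmp C h g, rho L1 (cmp C h (cmp C g f)), lmap_lift C L1 f s (cmp C h g), idn C (cd C h)))
     (idn C (cd C h))"
  by (rule comm_squareI) (use rho_natural[OF L2 square_lift_hg] square_lift_hg L1 L2 arrs3 in simp_all)

private lemma square_rho_L1:
  "comm_square C (rho L1 (cmp C g f)) (rho L1 (cmp C h (cmp C g f)))
     (E1 L1 (cmp C g f, cmp C h (cmp C g f), idn C (dm C f), h)) h"
proof -
  have sq: "comm_square C (cmp C g f) (cmp C h (cmp C g f)) (idn C (dm C f)) h"
    using comm_square_precomp[of "cmp C g f" h] arrs3 by simp
  show ?thesis
    by (rule comm_squareI) (use rho_natural[OF L1 sq] sq L1 arrs3 in simp_all)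
qed

private lemma composite_section_tens_left_eq:
  "composite_section C (tens C L3 L2) L1 f s (cmp C h g) (composite_section C L3 L2 g t h u)
   = cmp C (E1 L3 (h, rho L2 (rho L1 (cmp C h (cmp C g f))),
       cmp C (E1 L2 (g, rho L1 (cmp C h (cmp C g f)), lmap_lift C L1 f s (cmp C h g), h)) t, idn C (cd C h))) u"
proof -
  have "comm_square C g (cmp C h g) (idn C (dm C g)) h"
    using comm_square_precomp arrs3 by simp
  then show ?thesis
    unfolding composite_section_def
    using E1_comp_assoc[OF L3 square_lift_h square_rho_L2] E1_comp_assoc[OF L2 _ square_lift_hg]
      square_lift_h square_lift_hg L1 L2 L3 arrs3 lift_arrs
    unfolding lmap_lift_def[of C L2] by simp
qed

lemma composite_section_assoc:
  "composite_section C (tens C L3 L2) L1 f s (cmp C h g) (composite_section C L3 L2 g t h u)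
   = composite_section C L3 (tens C L2 L1) (cmp C g f) (composite_section C L2 L1 f s g t) h u"
  unfolding composite_section_tens_left_eq unfolding composite_section_def
  using E1_comp_assoc[OF L2 square_lift_g square_rho_L1] square_lift_g
    lmap_lift_cmp[OF L1 lmap1 arrs3(2) fg arrs3(3) gh] L1 L2 arrs3 lift_arrs
  unfolding lmap_lift_def[of C "tens C L2 L1"] by simp

text \<open>\<^term>\<open>tens C L3 L2\<close> is not known to satisfy \<^const>\<open>comonad_dom\<close>, so the typing of this
  composite section cannot be obtained from \<open>cd_composite_section\<close>.\<close>

lemma composite_section_tens_arr:
  "composite_section C (tens C L3 L2) L1 f s (cmp C h g) (composite_section C L3 L2 g t h u) \<in> arr C"
  and cd_composite_section_tens:
  "cd C (composite_section C (tens C L3 L2) L1 f s (cmp C h g) (composite_section C L3 L2 g t h u))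
     = E0 L3 (rho L2 (rho L1 (cmp C h (cmp C g f))))"
proof -
  have "comm_square C h (rho L2 (rho L1 (cmp C h (cmp C g f))))
      (cmp C (E1 L2 (g, rho L1 (cmp C h (cmp C g f)), lmap_lift C L1 f s (cmp C h g), h)) t) (idn C (cd C h))"
    using comm_square_comp[OF square_lift_h square_rho_L2] comm_square_precomp[of g h]
      E1_comp_assoc[OF L2 _ square_lift_hg] L2 arrs3 lift_arrs
    unfolding lmap_lift_def[of C L2] by simp
  then show "composite_section C (tens C L3 L2) L1 f s (cmp C h g) (composite_section C L3 L2 g t h u) \<in> arr C"
    and "cd C (composite_section C (tens C L3 L2) L1 f s (cmp C h g) (composite_section C L3 L2 g t h u))
      = E0 L3 (rho L2 (rho L1 (cmp C h (cmp C g f))))"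
    unfolding composite_section_tens_left_eq using L3 arrs3 by simp_all
qed

end

lemma composite_section_unit_left:
  "comonad_dom C L \<Longrightarrow> (f,s) \<in> obj (LMap C L) \<Longrightarrow>
   composite_section C (unitC C) L f s (idn C (cd C f)) (idn C (cd C f)) = s"
  unfolding composite_section_def lmap_lift_def using LMap_objD[of f s L] by simp

lemma composite_section_unit_right:
  "comonad_dom C L \<Longrightarrow> (f,s) \<in> obj (LMap C L) \<Longrightarrow>
   composite_section C L (unitC C) (idn C (dm C f)) (idn C (dm C f)) f s = s"
  unfolding composite_section_def lmap_lift_def using LMap_objD[of f s L] by simp

lemma composite_section_LMap_arr:
  assumes L1: "comonad_dom C L1" and L2: "comonad_dom C L2"
    and arr1: "((f,s),(f',s'),h,k) \<in> arr (LMap C L1)" and arr2: "((g,t),(g',t'),k,k') \<in> arr (LMap C L2)"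
  shows "((cmp C g f, composite_section C L2 L1 f s g t), (cmp C g' f', composite_section C L2 L1 f' s' g' t'), h, k')
    \<in> arr (LMap C (tens C L2 L1))"
proof -
  have sq1: "comm_square C f f' h k" and sq2: "comm_square C g g' k k'"
    and objs: "(f,s) \<in> obj (LMap C L1)" "(f',s') \<in> obj (LMap C L1)"
      "(g,t) \<in> obj (LMap C L2)" "(g',t') \<in> obj (LMap C L2)"
    using arr1 arr2 unfolding LMap_arr_iff by auto
  have "cd C f = dm C g" "cd C f' = dm C g'"
    using comm_square_arrs[OF sq1] comm_square_arrs[OF sq2] by simp_all
  then show ?thesis
    unfolding LMap_arr_iff comm_square_def[symmetric]
    using composite_section_LMap_obj[OF L1 L2 objs(1,3)] composite_section_LMap_obj[OF L1 L2 objs(2,4)]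
      comm_square_paste[OF sq1 sq2] composite_section_square[OF L1 L2 arr1 arr2]
    by simp
qed

end

section \<open>The lax monoidal structure\<close>

(* On arrows of the pullback the left edge of the L2-square is the right edge k of the L1-square,
   hence the wildcard. *)
definition lax_mult :: "('o,'m) cat \<Rightarrow> ('o,'m) comon \<Rightarrow> ('o,'m) comon \<Rightarrow>
    (('m \<times> 'm) \<times> ('m \<times> 'm), 'm gmor \<times> 'm gmor, 'm \<times> 'm, 'm gmor) ftr" where
  "lax_mult C L2 L1 =
    \<lparr> fo = (\<lambda>((f,s),(g,t)). (cmp C g f, composite_section C L2 L1 f s g t)),
      fa = (\<lambda>(((f,s),(f',s'),h,k),((g,t),(g',t'),_,k')).
              ((cmp C g f, composite_section C L2 L1 f s g t),
               (cmp C g' f', composite_section C L2 L1 f' s' g' t'), h, k')) \<rparr>"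

definition lax_unit :: "('o,'m) cat \<Rightarrow> ('o, 'm, 'm \<times> 'm, 'm gmor) ftr" where
  "lax_unit C = \<lparr> fo = (\<lambda>X. (idn C X, idn C X)),
     fa = (\<lambda>m. ((idn C (dm C m), idn C (dm C m)), (idn C (cd C m), idn C (cd C m)), m, m)) \<rparr>"

lemma lax_mult_simps [simp]:
  "fo (lax_mult C L2 L1) ((f,s),(g,t)) = (cmp C g f, composite_section C L2 L1 f s g t)"
  "fa (lax_mult C L2 L1) (((f,s),(f',s'),h,k),((g,t),(g',t'),k'',k')) =
     ((cmp C g f, composite_section C L2 L1 f s g t), (cmp C g' f', composite_section C L2 L1 f' s' g' t'), h, k')"
  unfolding lax_mult_def by simp_all

lemma lax_unit_simps [simp]:
  "fo (lax_unit C) X = (idn C X, idn C X)"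
  "fa (lax_unit C) m = ((idn C (dm C m), idn C (dm C m)), (idn C (cd C m), idn C (cd C m)), m, m)"
  unfolding lax_unit_def by simp_all

context ambient_category
begin

lemma over_functor_lax_mult:
  assumes L1: "comonad_dom C L1" and L2: "comonad_dom C L2"
  shows "over_functor (bullet C (Gob C L2) (Gob C L1)) (Gob C (tens C L2 L1)) (lax_mult C L2 L1)"
  unfolding over_functor_def is_functor_def
  using composite_section_LMap_obj[OF L1 L2] composite_section_LMap_arr[OF L1 L2]
  by (auto simp: bullet_simps dest: LMap_arrD) (auto dest!: LMap_objD)

lemma over_functor_lax_unit: "over_functor (unitI C) (Gob C (unitC C)) (lax_unit C)"
  unfolding over_functor_def is_functor_def
  by (auto simp: LMap_obj_iff LMap_arr_iff comm_square_iff)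

lemma lax_mult_natural:
  assumes L2: "comonad_dom C L2" and L2': "comonad_dom C L2'"
    and L1: "comonad_dom C L1" and L1': "comonad_dom C L1'"
    and \<beta>: "comon_mor C L2 L2' \<beta>" and \<alpha>: "comon_mor C L1 L1' \<alpha>"
  shows "(\<forall>x\<in>obj (fst (bullet C (Gob C L2) (Gob C L1))).
           fo (lax_mult C L2' L1') (map_prod (fo (Gmor C \<alpha>)) (fo (Gmor C \<beta>)) x)
             = fo (Gmor C (tens_mor C L2 L1 L1' \<beta> \<alpha>)) (fo (lax_mult C L2 L1) x)) \<and>
         (\<forall>x\<in>arr (fst (bullet C (Gob C L2) (Gob C L1))).
           fa (lax_mult C L2' L1') (map_prod (fa (Gmor C \<alpha>)) (fa (Gmor C \<beta>)) x)
             = fa (Gmor C (tens_mor C L2 L1 L1' \<beta> \<alpha>)) (fa (lax_mult C L2 L1) x))"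
  using composite_section_comon_mor[OF L1 L2 L1' L2' \<beta> \<alpha>]
  by (auto simp: bullet_simps dest!: LMap_arrD)

lemma lax_mult_assoc:
  assumes L3: "comonad_dom C L3" and L2: "comonad_dom C L2" and L1: "comonad_dom C L1"
  shows "(\<forall>x\<in>obj (fst (bullet C (bullet C (Gob C L3) (Gob C L2)) (Gob C L1))).
           fo (Gmor C (idc C (tens C (tens C L3 L2) L1)))
              (fo (lax_mult C (tens C L3 L2) L1) (map_prod id (fo (lax_mult C L3 L2)) x))
           = fo (lax_mult C L3 (tens C L2 L1)) (map_prod (fo (lax_mult C L2 L1)) id (reassoc x))) \<and>
         (\<forall>x\<in>arr (fst (bullet C (bullet C (Gob C L3) (Gob C L2)) (Gob C L1))).
           fa (Gmor C (idc C (tens C (tens C L3 L2) L1)))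
              (fa (lax_mult C (tens C L3 L2) L1) (map_prod id (fa (lax_mult C L3 L2)) x))
           = fa (lax_mult C L3 (tens C L2 L1)) (map_prod (fa (lax_mult C L2 L1)) id (reassoc x)))"
proof (intro conjI ballI)
  fix x
  assume "x \<in> obj (fst (bullet C (bullet C (Gob C L3) (Gob C L2)) (Gob C L1)))"
  then obtain f s g t h u where x: "x = ((f,s),((g,t),(h,u)))"
    and lmaps: "(f,s) \<in> obj (LMap C L1)" "(g,t) \<in> obj (LMap C L2)" "(h,u) \<in> obj (LMap C L3)"
    and fhg: "cd C f = dm C (cmp C h g)" and gh: "cd C g = dm C h"
    by (auto simp: bullet_simps)
  have fg: "cd C f = dm C g"
    using fhg gh LMap_objD[OF lmaps(2)] LMap_objD[OF lmaps(3)] by simp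
  show "fo (Gmor C (idc C (tens C (tens C L3 L2) L1)))
          (fo (lax_mult C (tens C L3 L2) L1) (map_prod id (fo (lax_mult C L3 L2)) x))
        = fo (lax_mult C L3 (tens C L2 L1)) (map_prod (fo (lax_mult C L2 L1)) id (reassoc x))"
    unfolding x
    using composite_section_assoc[OF L1 L2 L3 lmaps fg gh] composite_section_tens_arr[OF L1 L2 L3 lmaps fg gh]
      cd_composite_section_tens[OF L1 L2 L3 lmaps fg gh] LMap_objD[OF lmaps(1)]
      LMap_objD[OF lmaps(2)] LMap_objD[OF lmaps(3)] fg gh
    by (simp add: reassoc_def idc_def)
next
  fix x
  assume "x \<in> arr (fst (bullet C (bullet C (Gob C L3) (Gob C L2)) (Gob C L1)))"
  then obtain f s f' s' g t g' t' h u h' u' k1 k2 k3 k4 where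
    x: "x = (((f,s),(f',s'),k1,k2),(((g,t),(g',t'),k2,k3),((h,u),(h',u'),k3,k4)))"
    and arrs: "((f,s),(f',s'),k1,k2) \<in> arr (LMap C L1)" "((g,t),(g',t'),k2,k3) \<in> arr (LMap C L2)"
      "((h,u),(h',u'),k3,k4) \<in> arr (LMap C L3)"
    by (auto simp: bullet_simps dest: LMap_arrD)
  note parts = LMap_arrD[OF arrs(1)] LMap_arrD[OF arrs(2)] LMap_arrD[OF arrs(3)]
  show "fa (Gmor C (idc C (tens C (tens C L3 L2) L1)))
          (fa (lax_mult C (tens C L3 L2) L1) (map_prod id (fa (lax_mult C L3 L2)) x))
        = fa (lax_mult C L3 (tens C L2 L1)) (map_prod (fa (lax_mult C L2 L1)) id (reassoc x))"
    unfolding x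
    using parts composite_section_assoc[OF L1 L2 L3] composite_section_tens_arr[OF L1 L2 L3]
      cd_composite_section_tens[OF L1 L2 L3]
    by (simp add: reassoc_def idc_def)
qed

lemma lax_mult_unit_left:
  assumes L: "comonad_dom C L"
  shows "(\<forall>x\<in>obj (fst (bullet C (unitI C) (Gob C L))).
           fo (Gmor C (idc C (tens C (unitC C) L))) (fo (lax_mult C (unitC C) L) (map_prod id (fo (lax_unit C)) x))
             = fst x) \<and>
         (\<forall>x\<in>arr (fst (bullet C (unitI C) (Gob C L))).
           fa (Gmor C (idc C (tens C (unitC C) L))) (fa (lax_mult C (unitC C) L) (map_prod id (fa (lax_unit C)) x))
             = fst x)"
proof (intro conjI ballI)
  fix x
  assume "x \<in> obj (fst (bullet C (unitI C) (Gob C L)))"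
  then obtain f s where x: "x = ((f,s), cd C f)" and lmap: "(f,s) \<in> obj (LMap C L)"
    by (auto simp: bullet_simps dest: LMap_objD)
  show "fo (Gmor C (idc C (tens C (unitC C) L))) (fo (lax_mult C (unitC C) L) (map_prod id (fo (lax_unit C)) x))
      = fst x"
    unfolding x using composite_section_unit_left[OF L lmap] LMap_objD[OF lmap] L by (simp add: idc_def)
next
  fix x
  assume "x \<in> arr (fst (bullet C (unitI C) (Gob C L)))"
  then obtain f s f' s' h k where x: "x = (((f,s),(f',s'),h,k), k)" and lmap: "((f,s),(f',s'),h,k) \<in> arr (LMap C L)"
    by (auto simp: bullet_simps)
  note parts = LMap_arrD[OF lmap]
  show "fa (Gmor C (idc C (tens C (unitC C) L))) (fa (lax_mult C (unitC C) L) (map_prod id (fa (lax_unit C)) x))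
      = fst x"
    unfolding x using parts composite_section_unit_left[OF L] LMap_objD[of f s L] LMap_objD[of f' s' L] L
    by (simp add: idc_def)
qed

lemma lax_mult_unit_right:
  assumes L: "comonad_dom C L"
  shows "(\<forall>x\<in>obj (fst (bullet C (Gob C L) (unitI C))).
           fo (Gmor C (idc C (tens C L (unitC C)))) (fo (lax_mult C L (unitC C)) (map_prod (fo (lax_unit C)) id x))
             = snd x) \<and>
         (\<forall>x\<in>arr (fst (bullet C (Gob C L) (unitI C))).
           fa (Gmor C (idc C (tens C L (unitC C)))) (fa (lax_mult C L (unitC C)) (map_prod (fa (lax_unit C)) id x))
             = snd x)"
proof (intro conjI ballI)
  fix x
  assume "x \<in> obj (fst (bullet C (Gob C L) (unitI C)))"
  then obtain f s where x: "x = (dm C f, (f,s))" and lmap: "(f,s) \<in> obj (LMap C L)"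
    by (auto simp: bullet_simps dest: LMap_objD)
  show "fo (Gmor C (idc C (tens C L (unitC C)))) (fo (lax_mult C L (unitC C)) (map_prod (fo (lax_unit C)) id x))
      = snd x"
    unfolding x using composite_section_unit_right[OF L lmap] LMap_objD[OF lmap] L by (simp add: idc_def)
next
  fix x
  assume "x \<in> arr (fst (bullet C (Gob C L) (unitI C)))"
  then obtain f s f' s' h k where x: "x = (h, ((f,s),(f',s'),h,k))" and lmap: "((f,s),(f',s'),h,k) \<in> arr (LMap C L)"
    by (auto simp: bullet_simps)
  note parts = LMap_arrD[OF lmap]
  show "fa (Gmor C (idc C (tens C L (unitC C)))) (fa (lax_mult C L (unitC C)) (map_prod (fa (lax_unit C)) id x))
      = snd x"
    unfolding x using parts composite_section_unit_right[OF L] LMap_objD[of f s L] LMap_objD[of f' s' L] L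
    by (simp add: idc_def)
qed

lemma lax_monoidal_G_lax_mult: "lax_monoidal_G C (lax_mult C) (lax_unit C)"
  unfolding lax_monoidal_G_def
  by (simp add: over_functor_lax_mult over_functor_lax_unit lax_mult_natural lax_mult_assoc
      lax_mult_unit_left lax_mult_unit_right)

end

theorem proposition6p13:
  fixes C :: "('o,'m) cat"
  assumes "category C"
  shows "(\<forall>L. comonad_dom C L \<longrightarrow> over_cat C (Gob C L)) \<and>
         (\<forall>L L' \<alpha>. comonad_dom C L \<longrightarrow> comonad_dom C L' \<longrightarrow> comon_mor C L L' \<alpha> \<longrightarrow>
              over_functor (Gob C L) (Gob C L') (Gmor C \<alpha>)) \<and>
         (\<exists>\<phi> \<phi>0. lax_monoidal_G C \<phi> \<phi>0)"
proof -
  interpret ambient_category C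
    using assms by unfold_locales
  show ?thesis
    using over_cat_Gob over_functor_Gmor lax_monoidal_G_lax_mult by blast
qed

end
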